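(* Let $J>0$, $h\ne0$, $\rho>0$, and $\varepsilon\in\mathcal{E}_{h,\rho}$. Let $f:\mathbb{R}^N\to\mathbb{R}$ be integrable with $\langle|f|\rangle_{\mathrm{MC}}^{m_\pm,\rho;N}\le K$ for some $K\ge0$ whenever these ensembles are defined. Then \[ \left|\langle f\rangle_{\mathrm{MC}}^{\varepsilon,\rho;N}-\langle f\rangle_{\mathrm{MC}}^{m,\rho;N}\right|\le2K\left|\frac{\rho-\left(\frac{|h|}J+\sqrt{\frac{h^2}{J^2}-\frac{2\varepsilon}J}\right)^2}{\rho-\left(\frac{|h|}J-\sqrt{\frac{h^2}{J^2}-\frac{2\varepsilon}J}\right)^2}\right|^{\frac{N-3}2}, \] where $m=-\frac hJ+\mathrm{sgn}(h)\sqrt{\frac{h^2}{J^2}-\frac{2\varepsilon}J}$. In addition, $\langle f\rangle_{\mathrm{MC}}^{\varepsilon,\rho;N}=\langle f\rangle_{\mathrm{MC}}^{m,\rho;N}+O(e^{-cN})$ for some constant $c>0$.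
   Context: Mean-field spherical model: $\Lambda$ finite lattice, $N=|\Lambda|$, fields $\phi\in\mathbb{R}^\Lambda\cong\mathbb{R}^N$, $J>0$, $h\in\mathbb{R}$, energy $H[\phi]=-\frac J{2N}(\sum_x\phi_x)^2-h\sum_x\phi_x$, particle number $\sum_x\phi_x^2$. For $\rho>0$, $|m|<\sqrt\rho$, $\mu_{\mathrm{MC}}^{m,\rho;N}$ is the normalized uniform surface measure on the $(N-2)$-sphere $\{\sum_x\phi_x=mN,\ \sum_x\phi_x^2=\rho N\}$, and $Z_{\mathrm{MC}}(m,\rho;N)=(\rho-m^2)^{(N-3)/2}$. For $\varepsilon\le\frac{h^2}{2J}$ set $m_\pm=-\frac hJ\pm\sqrt{\frac{h^2}{J^2}-\frac{2\varepsilon}J}$. Fixed energy ensemble: if $\varepsilon<\frac{h^2}{2J}$ and $m_+^2,m_-^2<\rho$, $\langle f\rangle_{\mathrm{MC}}^{\varepsilon,\rho;N}=\sum_{\pm}\frac{Z_{\mathrm{MC}}(m_\pm,\rho;N)}{Z_{\mathrm{MC}}(m_+,\rho;N)+Z_{\mathrm{MC}}(m_-,\rho;N)}\langle f\rangle_{\mathrm{MC}}^{m_\pm,\rho;N}$; if $\varepsilon<\frac{h^2}{2J}$ and $\min(m_-^2,m_+^2)<\rho\le\max(m_-^2,m_+^2)$, it equals $\langle f\rangle_{\mathrm{MC}}^{m',\rho;N}$ with $m'$ the one of $m_\pm$ of smaller absolute value; if $\varepsilon=\frac{h^2}{2J}$ and $\rho>\frac{h^2}{J^2}$, it equals $\langle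 f\rangle_{\mathrm{MC}}^{-h/J,\rho;N}$. The set of allowed energies is $\mathcal{E}_{h,\rho}=\{\varepsilon\le\frac{h^2}{2J}:\ |\frac{|h|}J-\sqrt{\frac{h^2}{J^2}-\frac{2\varepsilon}J}|<\sqrt\rho\}$. $O(\cdot)$ refers to $N\to\infty$. *)

theory Defs
  imports "HOL-Probability.Probability" "HOL-Library.Landau_Symbols"
begin

text \<open>Lattice \<Lambda> = {..<N}; fields are functions nat \<Rightarrow> real (restricted to {..<N}).\<close>

definition gauss :: "nat \<Rightarrow> (nat \<Rightarrow> real) measure" where
  "gauss N = PiM {..<N} (\<lambda>_. density lborel std_normal_density)"

text \<open>Map sending a standard Gaussian vector x to a point of the (N-2)-sphere
  {sum phi = m N, sum phi^2 = rho N}: centre m*1 plus radius sqrt(N(rho-m^2)) times the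
  normalised projection of x onto the hyperplane orthogonal to (1,...,1).
  Its image measure is the normalized uniform surface measure of that sphere.\<close>
definition mc_point :: "nat \<Rightarrow> real \<Rightarrow> real \<Rightarrow> (nat \<Rightarrow> real) \<Rightarrow> (nat \<Rightarrow> real)" where
  "mc_point N m \<rho> x =
     (let a = (\<Sum>i<N. x i) / real N;
          r = sqrt (\<Sum>i<N. (x i - a)\<^sup>2)
      in (\<lambda>i\<in>{..<N}. m + sqrt (real N * (\<rho> - m\<^sup>2)) * ((x i - a) / r)))"

definition mc_measure :: "nat \<Rightarrow> real \<Rightarrow> real \<Rightarrow> (nat \<Rightarrow> real) measure" where
  "mc_measure N m \<rho> = distr (gauss N) (PiM {..<N} (\<lambda>_. borel)) (mc_point N m \<rho>)"

definition mc_exp :: "nat \<Rightarrow> real \<Rightarrow> real \<Rightarrow> ((nat \<Rightarrow> real) \<Rightarrow> real) \<Rightarrow> real" where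
  "mc_exp N m \<rho> f = (\<integral>\<phi>. f \<phi> \<partial>mc_measure N m \<rho>)"

definition Z_mc :: "nat \<Rightarrow> real \<Rightarrow> real \<Rightarrow> real" where
  "Z_mc N m \<rho> = (\<rho> - m\<^sup>2) powr ((real N - 3) / 2)"

definition m_plus :: "real \<Rightarrow> real \<Rightarrow> real \<Rightarrow> real" where
  "m_plus J h \<epsilon> = - h / J + sqrt (h\<^sup>2 / J\<^sup>2 - 2 * \<epsilon> / J)"

definition m_minus :: "real \<Rightarrow> real \<Rightarrow> real \<Rightarrow> real" where
  "m_minus J h \<epsilon> = - h / J - sqrt (h\<^sup>2 / J\<^sup>2 - 2 * \<epsilon> / J)"

definition fe_exp :: "nat \<Rightarrow> real \<Rightarrow> real \<Rightarrow> real \<Rightarrow> real \<Rightarrow> ((nat \<Rightarrow> real) \<Rightarrow> real) \<Rightarrow> real" where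
  "fe_exp N J h \<epsilon> \<rho> f =
    (let mp = m_plus J h \<epsilon>; mm = m_minus J h \<epsilon> in
     if \<epsilon> < h\<^sup>2 / (2 * J) \<and> mp\<^sup>2 < \<rho> \<and> mm\<^sup>2 < \<rho> then
       (Z_mc N mp \<rho> * mc_exp N mp \<rho> f + Z_mc N mm \<rho> * mc_exp N mm \<rho> f)
         / (Z_mc N mp \<rho> + Z_mc N mm \<rho>)
     else if \<epsilon> < h\<^sup>2 / (2 * J) \<and> min (mm\<^sup>2) (mp\<^sup>2) < \<rho> \<and> \<rho> \<le> max (mm\<^sup>2) (mp\<^sup>2) then
       mc_exp N (if \<bar>mp\<bar> < \<bar>mm\<bar> then mp else mm) \<rho> f
     else if \<epsilon> = h\<^sup>2 / (2 * J) \<and> \<rho> > h\<^sup>2 / J\<^sup>2 then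
       mc_exp N (- h / J) \<rho> f
     else undefined)"

definition energy_set :: "real \<Rightarrow> real \<Rightarrow> real \<Rightarrow> real set" where
  "energy_set J h \<rho> = {\<epsilon>. \<epsilon> \<le> h\<^sup>2 / (2 * J) \<and>
      \<bar>\<bar>h\<bar> / J - sqrt (h\<^sup>2 / J\<^sup>2 - 2 * \<epsilon> / J)\<bar> < sqrt \<rho>}"

end

theory Submission
  imports Defs
begin

text \<open>
  Of the two magnetisations with the prescribed energy, the fixed energy ensemble either
  mixes the two microcanonical ensembles with weights (\<rho> - m^2) powr ((N - 3) / 2), or
  uses the one of smaller modulus alone when the other is not admissible. A mixture with
  weights z, z' of two averages bounded by K differs from the first one by at most
  2 K z' / z, and here z' / z = q powr ((N - 3) / 2), where 0 < q < 1 is the ratio in the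
  theorem; this decays exponentially in N.
\<close>

lemma abs_weighted_mean_diff_le:
  fixes z\<^sub>1 z\<^sub>2 x\<^sub>1 x\<^sub>2 K :: real
  assumes "z\<^sub>1 > 0" "z\<^sub>2 \<ge> 0" "\<bar>x\<^sub>1\<bar> \<le> K" "\<bar>x\<^sub>2\<bar> \<le> K"
  shows "\<bar>(z\<^sub>1 * x\<^sub>1 + z\<^sub>2 * x\<^sub>2) / (z\<^sub>1 + z\<^sub>2) - x\<^sub>1\<bar> \<le> 2 * K * (z\<^sub>2 / z\<^sub>1)"
proof -
  have "(z\<^sub>1 * x\<^sub>1 + z\<^sub>2 * x\<^sub>2) / (z\<^sub>1 + z\<^sub>2) - x\<^sub>1 = z\<^sub>2 * (x\<^sub>2 - x\<^sub>1) / (z\<^sub>1 + z\<^sub>2)"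
    using assms by (simp add: field_simps)
  then have "\<bar>(z\<^sub>1 * x\<^sub>1 + z\<^sub>2 * x\<^sub>2) / (z\<^sub>1 + z\<^sub>2) - x\<^sub>1\<bar> = z\<^sub>2 * \<bar>x\<^sub>2 - x\<^sub>1\<bar> / (z\<^sub>1 + z\<^sub>2)"
    using assms by (simp add: abs_mult)
  also have "\<dots> \<le> z\<^sub>2 * (2 * K) / (z\<^sub>1 + z\<^sub>2)"
    using assms by (intro divide_right_mono mult_left_mono) auto
  also have "\<dots> \<le> z\<^sub>2 * (2 * K) / z\<^sub>1"
    using assms by (intro divide_left_mono mult_nonneg_nonneg) auto
  also have "\<dots> = 2 * K * (z\<^sub>2 / z\<^sub>1)"
    by simp
  finally show ?thesis .
qed

lemma abs_mc_exp_le: "\<bar>mc_exp N m \<rho> f\<bar> \<le> mc_exp N m \<rho> (\<lambda>\<phi>. \<bar>f \<phi>\<bar>)"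
  using integral_norm_bound[of "mc_measure N m \<rho>" f] by (simp add: mc_exp_def)

lemma powr_bound_imp_bigo_exp:
  fixes D :: "nat \<Rightarrow> real"
  assumes "0 < q" "q < 1" "\<And>N. \<bar>D N\<bar> \<le> C * q powr ((real N - 3) / 2)"
  shows "\<exists>c > 0. D \<in> O(\<lambda>N. exp (- c * real N))"
proof (intro exI conjI)
  define c where "c = - ln q / 2"
  show "c > 0" using assms by (simp add: c_def)
  have "q powr ((real N - 3) / 2) = q powr (-3/2) * exp (- c * real N)" for N
    using assms by (simp add: c_def powr_def exp_add [symmetric] field_simps)
  then show "D \<in> O(\<lambda>N. exp (- c * real N))"
    using assms(3) by (intro bigoI [where c = "C * q powr (-3/2)"]) (simp add: mult.assoc)
qed

definition energy_gap :: "real \<Rightarrow> real \<Rightarrow> real \<Rightarrow> real" where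
  "energy_gap J h \<epsilon> = sqrt (h\<^sup>2 / J\<^sup>2 - 2 * \<epsilon> / J)"

definition m_small :: "real \<Rightarrow> real \<Rightarrow> real \<Rightarrow> real" where
  "m_small J h \<epsilon> = - h / J + sgn h * energy_gap J h \<epsilon>"

definition m_large :: "real \<Rightarrow> real \<Rightarrow> real \<Rightarrow> real" where
  "m_large J h \<epsilon> = - h / J - sgn h * energy_gap J h \<epsilon>"

lemma energy_gap_nonneg:
  assumes "J > 0" "\<epsilon> \<le> h\<^sup>2 / (2 * J)"
  shows "energy_gap J h \<epsilon> \<ge> 0"
proof -
  have "2 * \<epsilon> / J \<le> h\<^sup>2 / J\<^sup>2"
    using assms by (simp add: field_simps power2_eq_square)
  then show ?thesis by (simp add: energy_gap_def)
qed

lemma energy_gap_eq_0_iff: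
  assumes "J > 0"
  shows "energy_gap J h \<epsilon> = 0 \<longleftrightarrow> \<epsilon> = h\<^sup>2 / (2 * J)"
  using assms by (auto simp: energy_gap_def field_simps power2_eq_square)

lemma energy_less_critical_if_gap_pos:
  assumes "J > 0" "\<epsilon> \<le> h\<^sup>2 / (2 * J)" "energy_gap J h \<epsilon> > 0"
  shows "\<epsilon> < h\<^sup>2 / (2 * J)"
  using assms energy_gap_eq_0_iff [OF assms(1), of h \<epsilon>] by (auto simp: less_le)

lemma m_plus_m_minus_cases:
  assumes "h \<noteq> 0"
  shows "m_plus J h \<epsilon> = m_small J h \<epsilon> \<and> m_minus J h \<epsilon> = m_large J h \<epsilon> \<or>
         m_plus J h \<epsilon> = m_large J h \<epsilon> \<and> m_minus J h \<epsilon> = m_small J h \<epsilon>"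
  using assms
  by (cases "h > 0") (auto simp: m_plus_def m_minus_def m_small_def m_large_def energy_gap_def sgn_if)

lemma m_small_eq: "J > 0 \<Longrightarrow> h \<noteq> 0 \<Longrightarrow> m_small J h \<epsilon> = - sgn h * (\<bar>h\<bar> / J - energy_gap J h \<epsilon>)"
  and m_large_eq: "J > 0 \<Longrightarrow> h \<noteq> 0 \<Longrightarrow> m_large J h \<epsilon> = - sgn h * (\<bar>h\<bar> / J + energy_gap J h \<epsilon>)"
  by (cases "h > 0"; simp add: m_small_def m_large_def sgn_if)+

lemma m_small_sq:
  assumes "J > 0" "h \<noteq> 0"
  shows "(m_small J h \<epsilon>)\<^sup>2 = (\<bar>h\<bar> / J - energy_gap J h \<epsilon>)\<^sup>2"
  using assms by (cases "h > 0") (auto simp: m_small_eq power2_eq_square algebra_simps)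

lemma m_large_sq:
  assumes "J > 0" "h \<noteq> 0"
  shows "(m_large J h \<epsilon>)\<^sup>2 = (\<bar>h\<bar> / J + energy_gap J h \<epsilon>)\<^sup>2"
  using assms by (cases "h > 0") (auto simp: m_large_eq power2_eq_square algebra_simps)

lemma abs_m_small_less_abs_m_large:
  assumes "J > 0" "h \<noteq> 0" "energy_gap J h \<epsilon> > 0"
  shows "\<bar>m_small J h \<epsilon>\<bar> < \<bar>m_large J h \<epsilon>\<bar>"
proof -
  have "\<bar>h\<bar> / J > 0"
    using assms(1,2) by simp
  then show ?thesis
    using assms by (simp add: m_small_eq m_large_eq abs_mult abs_less_iff)
qed

lemma m_small_sq_less_m_large_sq:
  assumes "J > 0" "h \<noteq> 0" "energy_gap J h \<epsilon> > 0"
  shows "(m_small J h \<epsilon>)\<^sup>2 < (m_large J h \<epsilon>)\<^sup>2"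
  using abs_m_small_less_abs_m_large [OF assms] by (metis abs_le_square_iff not_le)

lemma m_small_sq_less_if_energy_set:
  assumes "J > 0" "h \<noteq> 0" "\<epsilon> \<in> energy_set J h \<rho>"
  shows "(m_small J h \<epsilon>)\<^sup>2 < \<rho>"
proof -
  have "\<bar>\<bar>h\<bar> / J - energy_gap J h \<epsilon>\<bar> < sqrt \<rho>"
    using assms(3) by (simp add: energy_set_def energy_gap_def)
  then show ?thesis
    using assms(1,2) by (simp add: m_small_sq real_less_rsqrt flip: real_sqrt_abs)
qed

lemma fe_exp_eq_mixture:
  assumes "J > 0" "h \<noteq> 0" "\<epsilon> < h\<^sup>2 / (2 * J)"
    and "(m_small J h \<epsilon>)\<^sup>2 < \<rho>" "(m_large J h \<epsilon>)\<^sup>2 < \<rho>"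
  shows "fe_exp N J h \<epsilon> \<rho> f =
    (Z_mc N (m_small J h \<epsilon>) \<rho> * mc_exp N (m_small J h \<epsilon>) \<rho> f
       + Z_mc N (m_large J h \<epsilon>) \<rho> * mc_exp N (m_large J h \<epsilon>) \<rho> f)
    / (Z_mc N (m_small J h \<epsilon>) \<rho> + Z_mc N (m_large J h \<epsilon>) \<rho>)"
  using m_plus_m_minus_cases [OF assms(2), of J \<epsilon>] assms(3-5)
  by (auto simp: fe_exp_def Let_def add.commute)

lemma fe_exp_eq_m_small:
  assumes "J > 0" "h \<noteq> 0" "\<epsilon> \<in> energy_set J h \<rho>"
    and "\<not> (energy_gap J h \<epsilon> > 0 \<and> (m_large J h \<epsilon>)\<^sup>2 < \<rho>)"
  shows "fe_exp N J h \<epsilon> \<rho> f = mc_exp N (m_small J h \<epsilon>) \<rho> f"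
proof -
  have small: "(m_small J h \<epsilon>)\<^sup>2 < \<rho>"
    using m_small_sq_less_if_energy_set assms(1-3) .
  have eps: "\<epsilon> \<le> h\<^sup>2 / (2 * J)"
    using assms(3) by (simp add: energy_set_def)
  show ?thesis
  proof (cases "energy_gap J h \<epsilon> = 0")
    case True
    then have "\<epsilon> = h\<^sup>2 / (2 * J)" and "m_small J h \<epsilon> = - h / J"
      using energy_gap_eq_0_iff [OF assms(1)] by (auto simp: m_small_def)
    moreover have "\<rho> > h\<^sup>2 / J\<^sup>2"
      using small assms(1,2) True by (simp add: m_small_sq power_divide)
    ultimately show ?thesis by (simp add: fe_exp_def)
  next
    case False
    then have gap: "energy_gap J h \<epsilon> > 0"
      using energy_gap_nonneg [OF assms(1) eps] by simp
    then have "\<epsilon> < h\<^sup>2 / (2 * J)"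
      using energy_less_critical_if_gap_pos assms(1) eps by blast
    moreover have "\<bar>m_small J h \<epsilon>\<bar> < \<bar>m_large J h \<epsilon>\<bar>"
      using abs_m_small_less_abs_m_large assms(1,2) gap .
    moreover have "(m_small J h \<epsilon>)\<^sup>2 < (m_large J h \<epsilon>)\<^sup>2"
      using m_small_sq_less_m_large_sq assms(1,2) gap .
    ultimately show ?thesis
      using m_plus_m_minus_cases [OF assms(2), of J \<epsilon>] small gap assms(4)
      by (auto simp: fe_exp_def Let_def min_def max_def)
  qed
qed

lemma fe_exp_mixture_deviation_le:
  assumes "J > 0" "h \<noteq> 0" "\<epsilon> \<in> energy_set J h \<rho>"
    and "energy_gap J h \<epsilon> > 0" "(m_large J h \<epsilon>)\<^sup>2 < \<rho>"
    and "\<bar>mc_exp N (m_small J h \<epsilon>) \<rho> f\<bar> \<le> K" "\<bar>mc_exp N (m_large J h \<epsilon>) \<rho> f\<bar> \<le> K"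
  shows "\<bar>fe_exp N J h \<epsilon> \<rho> f - mc_exp N (m_small J h \<epsilon>) \<rho> f\<bar>
    \<le> 2 * K * ((\<rho> - (m_large J h \<epsilon>)\<^sup>2) / (\<rho> - (m_small J h \<epsilon>)\<^sup>2)) powr ((real N - 3) / 2)"
proof -
  have small: "(m_small J h \<epsilon>)\<^sup>2 < \<rho>"
    using m_small_sq_less_if_energy_set assms(1-3) .
  have "\<epsilon> < h\<^sup>2 / (2 * J)"
    using energy_less_critical_if_gap_pos assms(1,3,4) by (simp add: energy_set_def)
  then have mix: "fe_exp N J h \<epsilon> \<rho> f =
    (Z_mc N (m_small J h \<epsilon>) \<rho> * mc_exp N (m_small J h \<epsilon>) \<rho> f
       + Z_mc N (m_large J h \<epsilon>) \<rho> * mc_exp N (m_large J h \<epsilon>) \<rho> f)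
    / (Z_mc N (m_small J h \<epsilon>) \<rho> + Z_mc N (m_large J h \<epsilon>) \<rho>)"
    using fe_exp_eq_mixture assms(1,2,5) small by simp
  have "Z_mc N (m_large J h \<epsilon>) \<rho> / Z_mc N (m_small J h \<epsilon>) \<rho>
      = ((\<rho> - (m_large J h \<epsilon>)\<^sup>2) / (\<rho> - (m_small J h \<epsilon>)\<^sup>2)) powr ((real N - 3) / 2)"
    using small assms(5) by (simp add: Z_mc_def powr_divide)
  moreover have "Z_mc N (m_small J h \<epsilon>) \<rho> > 0"
    using small by (simp add: Z_mc_def)
  ultimately show ?thesis
    unfolding mix using abs_weighted_mean_diff_le assms(6,7)
    by (metis Z_mc_def powr_ge_zero)
qed

theorem theorem4p10:
  fixes J h \<rho> \<epsilon> K :: real and f :: "nat \<Rightarrow> (nat \<Rightarrow> real) \<Rightarrow> real"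
  assumes "J > 0" and "h \<noteq> 0" and "\<rho> > 0" and "\<epsilon> \<in> energy_set J h \<rho>" and "K \<ge> 0"
    and "\<And>N m. m \<in> {m_plus J h \<epsilon>, m_minus J h \<epsilon>} \<Longrightarrow> m\<^sup>2 < \<rho> \<Longrightarrow>
           integrable (mc_measure N m \<rho>) (f N) \<and> mc_exp N m \<rho> (\<lambda>\<phi>. \<bar>f N \<phi>\<bar>) \<le> K"
  shows "(\<forall>N. \<bar>fe_exp N J h \<epsilon> \<rho> (f N)
                 - mc_exp N (- h / J + sgn h * sqrt (h\<^sup>2 / J\<^sup>2 - 2 * \<epsilon> / J)) \<rho> (f N)\<bar>
            \<le> 2 * K * \<bar>(\<rho> - (\<bar>h\<bar> / J + sqrt (h\<^sup>2 / J\<^sup>2 - 2 * \<epsilon> / J))\<^sup>2)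
                      / (\<rho> - (\<bar>h\<bar> / J - sqrt (h\<^sup>2 / J\<^sup>2 - 2 * \<epsilon> / J))\<^sup>2)\<bar>
                  powr ((real N - 3) / 2))
       \<and> (\<exists>c > 0. (\<lambda>N. fe_exp N J h \<epsilon> \<rho> (f N)
                 - mc_exp N (- h / J + sgn h * sqrt (h\<^sup>2 / J\<^sup>2 - 2 * \<epsilon> / J)) \<rho> (f N))
             \<in> O(\<lambda>N. exp (- c * real N)))"
proof -
  let ?m = "m_small J h \<epsilon>" and ?m' = "m_large J h \<epsilon>"
  define q where "q = (\<rho> - ?m'\<^sup>2) / (\<rho> - ?m\<^sup>2)"
  define D where "D = (\<lambda>N. fe_exp N J h \<epsilon> \<rho> (f N) - mc_exp N ?m \<rho> (f N))"
  have m_eq: "- h / J + sgn h * sqrt (h\<^sup>2 / J\<^sup>2 - 2 * \<epsilon> / J) = ?m"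
    by (simp add: m_small_def energy_gap_def)
  have q_eq: "(\<rho> - (\<bar>h\<bar> / J + sqrt (h\<^sup>2 / J\<^sup>2 - 2 * \<epsilon> / J))\<^sup>2)
      / (\<rho> - (\<bar>h\<bar> / J - sqrt (h\<^sup>2 / J\<^sup>2 - 2 * \<epsilon> / J))\<^sup>2) = q"
    using assms(1,2) by (simp add: q_def m_small_sq m_large_sq energy_gap_def)
  have small: "?m\<^sup>2 < \<rho>"
    using m_small_sq_less_if_energy_set assms(1,2,4) .
  have bounded: "\<bar>mc_exp N m \<rho> (f N)\<bar> \<le> K" if "m \<in> {?m, ?m'}" "m\<^sup>2 < \<rho>" for N m
  proof -
    have "m \<in> {m_plus J h \<epsilon>, m_minus J h \<epsilon>}"
      using that(1) m_plus_m_minus_cases [OF assms(2), of J \<epsilon>] by auto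
    then show ?thesis
      using assms(6) [of m N] that(2) abs_mc_exp_le [of N m \<rho> "f N"] by linarith
  qed
  have "(\<forall>N. \<bar>D N\<bar> \<le> 2 * K * \<bar>q\<bar> powr ((real N - 3) / 2)) \<and> (\<exists>c > 0. D \<in> O(\<lambda>N. exp (- c * real N)))"
  proof (cases "energy_gap J h \<epsilon> > 0 \<and> ?m'\<^sup>2 < \<rho>")
    case True
    then have q: "0 < q" "q < 1"
      using small m_small_sq_less_m_large_sq [OF assms(1,2)] by (auto simp: q_def)
    have bound: "\<bar>D N\<bar> \<le> 2 * K * q powr ((real N - 3) / 2)" for N
      unfolding D_def q_def using True small assms(1,2,4)
      by (intro fe_exp_mixture_deviation_le bounded) auto
    show ?thesis
      using bound powr_bound_imp_bigo_exp [OF q bound] q by simp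
  next
    case False
    then have "D = (\<lambda>_. 0)"
      using fe_exp_eq_m_small assms(1,2,4) by (auto simp: D_def)
    then show ?thesis using assms(5) by (auto intro!: exI [of _ 1])
  qed
  then show ?thesis
    unfolding m_eq q_eq by (simp add: D_def)
qed

end
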